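(* Let $x\in\widetilde X$ and let $\theta\in I^{\mathbb{N}}$ be its itinerary, where $I=\{1,\dots,N\}$. Then \[ p(\theta,n+1)\leqslant p(\theta,n)+\sum_{k=2}^N(k-1)\,\#L_n^k(\theta)\qquad\forall\, n\geqslant 1. \] If moreover $f$ satisfies the separation property, then this inequality is an equality for all $n\geqslant 1$.
   Context: Let $(X,d)$ be a compact metric space, $X_1,\dots,X_N$ ($N\geqslant 2$) non-empty pairwise disjoint open subsets with $X=\bigcup_i\overline{X_i}$, $\Delta:=\{x\in\overline{X_i}\cap\overline{X_j}:i\neq j\}$, and $f:X\to X$ a map such that each $f|_{X_i}$ admits a continuous extension $f_i:\overline{X_i}\to X$. Separation property: each $f_i$ injective and $f_i(\overline{X_i})\cap f_j(\overline{X_j})=\emptyset$ for $i\neq j$. $\widetilde X:=\bigcap_{n\geqslant 0}f^{-n}(X\setminus\Delta)$; the itinerary of $x\in\widetilde X$ is $\theta$ with $\theta_t=i$ iff $f^t(x)\in X_i$. $L_n(\theta):=\{\theta_t\dots\theta_{t+n-1}:t\geqslant 0\}$, $p(\theta,n):=\#L_n(\theta)$. For $A\subset X$ let $F_i(A):=\overline{f(A\cap X_i)}$ and $A_{i_1\dots i_n}:=F_{i_n}\circ\dots\circ F_{i_1}(X)$. For $n\geqslant1$, $k\in I$, \[ L_n^k(\theta):=\{i_1\dots i_n\in L_n(\theta):\#\{j\in I:\exists t\geqslant0 \text{ with } f^{t+n}(x)\in A_{i_1\dots i_n}\cap X_j\}=k\}. \] *)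

theory Defs
  imports "HOL-Analysis.Analysis"
begin

definition Delta :: "nat \<Rightarrow> (nat \<Rightarrow> 'a::topological_space set) \<Rightarrow> 'a set" where
  "Delta N Xs = {x. \<exists>i\<in>{1..N}. \<exists>j\<in>{1..N}. i \<noteq> j \<and> x \<in> closure (Xs i) \<inter> closure (Xs j)}"

definition Xtilde :: "nat \<Rightarrow> (nat \<Rightarrow> 'a::topological_space set) \<Rightarrow> ('a \<Rightarrow> 'a) \<Rightarrow> 'a set" where
  "Xtilde N Xs f = (\<Inter>n. (f ^^ n) -` (UNIV - Delta N Xs))"

definition is_itinerary :: "nat \<Rightarrow> (nat \<Rightarrow> 'a set) \<Rightarrow> ('a \<Rightarrow> 'a) \<Rightarrow> 'a \<Rightarrow> (nat \<Rightarrow> nat) \<Rightarrow> bool" where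
  "is_itinerary N Xs f x \<theta> \<longleftrightarrow>
     (\<forall>t. \<forall>i\<in>{1..N}. \<theta> t = i \<longleftrightarrow> (f ^^ t) x \<in> Xs i) \<and> (\<forall>t. \<theta> t \<in> {1..N})"

definition Lang :: "nat \<Rightarrow> (nat \<Rightarrow> nat) \<Rightarrow> nat list set" where
  "Lang n \<theta> = {map \<theta> [t..<t+n] | t. True}"

definition complexity :: "(nat \<Rightarrow> nat) \<Rightarrow> nat \<Rightarrow> nat" where
  "complexity \<theta> n = card (Lang n \<theta>)"

definition Fop :: "(nat \<Rightarrow> 'a::topological_space set) \<Rightarrow> ('a \<Rightarrow> 'a) \<Rightarrow> nat \<Rightarrow> 'a set \<Rightarrow> 'a set" where
  "Fop Xs f i A = closure (f ` (A \<inter> Xs i))"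

definition Aword :: "(nat \<Rightarrow> 'a::topological_space set) \<Rightarrow> ('a \<Rightarrow> 'a) \<Rightarrow> nat list \<Rightarrow> 'a set" where
  "Aword Xs f w = foldl (\<lambda>A i. Fop Xs f i A) UNIV w"

definition Lang_k :: "nat \<Rightarrow> (nat \<Rightarrow> 'a::topological_space set) \<Rightarrow> ('a \<Rightarrow> 'a) \<Rightarrow> 'a \<Rightarrow> (nat \<Rightarrow> nat)
    \<Rightarrow> nat \<Rightarrow> nat \<Rightarrow> nat list set" where
  "Lang_k N Xs f x \<theta> n k = {w \<in> Lang n \<theta>.
      card {j \<in> {1..N}. \<exists>t. (f ^^ (t + n)) x \<in> Aword Xs f w \<inter> Xs j} = k}"

definition separation :: "nat \<Rightarrow> (nat \<Rightarrow> 'a::topological_space set) \<Rightarrow> (nat \<Rightarrow> 'a \<Rightarrow> 'a) \<Rightarrow> bool" where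
  "separation N Xs fe \<longleftrightarrow>
     (\<forall>i\<in>{1..N}. inj_on (fe i) (closure (Xs i))) \<and>
     (\<forall>i\<in>{1..N}. \<forall>j\<in>{1..N}. i \<noteq> j \<longrightarrow> fe i ` closure (Xs i) \<inter> fe j ` closure (Xs j) = {})"

end

theory Submission
  imports Defs
begin

text \<open>
  Every length-\<open>(n+1)\<close> word of \<open>\<theta>\<close> is a length-\<open>n\<close> word \<open>w\<close> followed by one symbol, so
  \<open>p(\<theta>,n+1)\<close> is the sum over \<open>w \<in> L\<^sub>n(\<theta>)\<close> of the number of symbols that can follow \<open>w\<close>.
  Whenever \<open>w\<close> occurs at time \<open>t\<close>, the orbit point \<open>f\<^sup>t\<^sup>+\<^sup>n(x)\<close> lies in \<open>A\<^sub>w\<close>, and the next symbol is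
  the piece containing it; hence the number of followers of \<open>w\<close> is at most the number \<open>k\<close> of
  pieces that the orbit meets inside \<open>A\<^sub>w\<close>. Summing \<open>k = 1 + (k - 1)\<close> over \<open>w\<close> gives the
  inequality. Under the separation property the branches \<open>f\<^sub>i\<close> are injective with disjoint
  images, so a point of the orbit in \<open>A\<^sub>w\<close> can only be reached along the word \<open>w\<close> itself
  (by compactness \<open>F\<^sub>i(A) \<subseteq> f\<^sub>i(A \<inter> closure X\<^sub>i)\<close> for closed \<open>A\<close>); thus every piece met is a genuine follower
  and equality holds.
\<close>

definition extensions :: "(nat \<Rightarrow> nat) \<Rightarrow> nat \<Rightarrow> nat list \<Rightarrow> nat list set" where
  "extensions \<theta> n w = {v \<in> Lang (Suc n) \<theta>. take n v = w}"

definition followers :: "(nat \<Rightarrow> nat) \<Rightarrow> nat \<Rightarrow> nat list \<Rightarrow> nat set" where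
  "followers \<theta> n w = {\<theta> (t + n) | t. map \<theta> [t..<t + n] = w}"

definition follower_pieces ::
    "nat \<Rightarrow> (nat \<Rightarrow> 'a::topological_space set) \<Rightarrow> ('a \<Rightarrow> 'a) \<Rightarrow> 'a \<Rightarrow> nat \<Rightarrow> nat list \<Rightarrow> nat set" where
  "follower_pieces N Xs f x n w = {j \<in> {1..N}. \<exists>t. (f ^^ (t + n)) x \<in> Aword Xs f w \<inter> Xs j}"

lemma Lang_k_eq_follower_pieces:
  "Lang_k N Xs f x \<theta> n k = {w \<in> Lang n \<theta>. card (follower_pieces N Xs f x n w) = k}"
  unfolding Lang_k_def follower_pieces_def ..

lemma card_follower_pieces_le: "card (follower_pieces N Xs f x n w) \<le> N"
proof -
  have "card (follower_pieces N Xs f x n w) \<le> card {1..N}"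
    by (rule card_mono) (auto simp: follower_pieces_def)
  then show ?thesis by simp
qed

lemma Lang_subset_lists:
  "\<forall>t. \<theta> t \<in> A \<Longrightarrow> Lang n \<theta> \<subseteq> {w. set w \<subseteq> A \<and> length w = n}"
  unfolding Lang_def by auto

lemma finite_Lang: "finite A \<Longrightarrow> \<forall>t. \<theta> t \<in> A \<Longrightarrow> finite (Lang n \<theta>)"
  by (rule finite_subset[OF Lang_subset_lists]) (auto intro: finite_lists_length_eq)

lemma Lang_Suc_eq_UN_extensions: "Lang (Suc n) \<theta> = (\<Union>w\<in>Lang n \<theta>. extensions \<theta> n w)"
  unfolding extensions_def Lang_def by (auto simp: take_map)

lemma card_Lang_Suc:
  assumes "finite A" "\<forall>t. \<theta> t \<in> A"
  shows "card (Lang (Suc n) \<theta>) = (\<Sum>w\<in>Lang n \<theta>. card (extensions \<theta> n w))"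
  unfolding Lang_Suc_eq_UN_extensions
  by (rule card_UN_disjoint) (auto simp: extensions_def finite_Lang[OF assms])

lemma inj_on_last_extensions: "inj_on last (extensions \<theta> n w)"
proof (rule inj_onI)
  fix u v assume "u \<in> extensions \<theta> n w" "v \<in> extensions \<theta> n w" "last u = last v"
  moreover have "ys = take n ys @ [last ys]" if "length ys = Suc n" for ys :: "nat list"
    using that by (metis append_butlast_last_id butlast_conv_take diff_Suc_1 list.size(3) nat.distinct(1))
  ultimately show "u = v"
    unfolding extensions_def Lang_def by auto
qed

lemma last_extensions:
  "last ` extensions \<theta> n w = followers \<theta> n w"
  unfolding extensions_def followers_def Lang_def by (force simp: take_map)

lemma card_extensions:
  "card (extensions \<theta> n w) = card (followers \<theta> n w)"
  using card_image[OF inj_on_last_extensions] by (simp add: last_extensions)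

lemma sum_eq_card_plus_weighted_level_sets:
  fixes c :: "'b \<Rightarrow> nat"
  assumes "finite L" "\<forall>w\<in>L. 1 \<le> c w \<and> c w \<le> N"
  shows "(\<Sum>w\<in>L. c w) = card L + (\<Sum>k=2..N. (k - 1) * card {w\<in>L. c w = k})"
proof -
  have "(\<Sum>w\<in>L. c w) = (\<Sum>w\<in>L. 1 + (c w - 1))"
    using assms(2) by (intro sum.cong) auto
  also have "\<dots> = card L + (\<Sum>w\<in>L. c w - 1)"
    unfolding sum.distrib by simp
  also have "(\<Sum>w\<in>L. c w - 1) = (\<Sum>k\<in>{1..N}. \<Sum>w\<in>{w\<in>L. c w = k}. c w - 1)"
    using assms by (intro sum.group[symmetric]) auto
  also have "\<dots> = (\<Sum>k\<in>{1..N}. (k - 1) * card {w\<in>L. c w = k})"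
    by (intro sum.cong) auto
  also have "\<dots> = (\<Sum>k=2..N. (k - 1) * card {w\<in>L. c w = k})"
    by (rule sum.mono_neutral_right) auto
  finally show ?thesis .
qed

lemma Aword_snoc: "Aword Xs f (w @ [i]) = Fop Xs f i (Aword Xs f w)"
  by (simp add: Aword_def)

lemma closed_Aword: "closed (Aword Xs f w)"
  by (induction w rule: rev_induct) (simp_all add: Aword_def Fop_def)

lemma is_itineraryD:
  assumes "is_itinerary N Xs f x \<theta>"
  shows "\<theta> t \<in> {1..N}" "(f ^^ t) x \<in> Xs (\<theta> t)"
    and "j \<in> {1..N} \<Longrightarrow> (f ^^ t) x \<in> Xs j \<Longrightarrow> \<theta> t = j"
  using assms unfolding is_itinerary_def by blast+

lemma orbit_in_Aword_of_itinerary: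
  assumes "is_itinerary N Xs f x \<theta>"
  shows "(f ^^ (t + n)) x \<in> Aword Xs f (map \<theta> [t..<t + n])"
proof (induction n)
  case 0
  then show ?case by (simp add: Aword_def)
next
  case (Suc n)
  then have "(f ^^ (t + n)) x \<in> Aword Xs f (map \<theta> [t..<t + n]) \<inter> Xs (\<theta> (t + n))"
    using is_itineraryD(2)[OF assms] by blast
  then have "(f ^^ (t + Suc n)) x \<in> f ` (Aword Xs f (map \<theta> [t..<t + n]) \<inter> Xs (\<theta> (t + n)))"
    by simp
  then show ?case
    using closure_subset by (fastforce simp: Aword_snoc Fop_def)
qed

lemma Fop_subset_image_closure:
  fixes Xs :: "nat \<Rightarrow> 'a::metric_space set"
  assumes "compact (UNIV :: 'a set)" "closed A"
    and "continuous_on (closure (Xs i)) g" "\<forall>y\<in>Xs i. g y = f y"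
  shows "Fop Xs f i A \<subseteq> g ` (A \<inter> closure (Xs i))"
  unfolding Fop_def
proof (rule closure_minimal)
  show "f ` (A \<inter> Xs i) \<subseteq> g ` (A \<inter> closure (Xs i))"
  proof
    fix y assume "y \<in> f ` (A \<inter> Xs i)"
    then obtain z where "z \<in> A \<inter> Xs i" "y = g z"
      using assms(4) by auto
    then show "y \<in> g ` (A \<inter> closure (Xs i))"
      using closure_subset by blast
  qed
  have "compact (A \<inter> closure (Xs i))"
    using compact_Int_closed[OF assms(1), of "A \<inter> closure (Xs i)"] assms(2) by auto
  then show "closed (g ` (A \<inter> closure (Xs i)))"
    using assms(3) by (intro compact_imp_closed compact_continuous_image)
      (auto intro: continuous_on_subset)
qed

lemma itinerary_before_entering_Aword:
  fixes Xs :: "nat \<Rightarrow> 'a::metric_space set"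
  assumes cpt: "compact (UNIV :: 'a set)"
    and ext: "\<forall>i\<in>{1..N}. continuous_on (closure (Xs i)) (fe i) \<and> (\<forall>y\<in>Xs i. fe i y = f y)"
    and itin: "is_itinerary N Xs f x \<theta>"
    and sep: "separation N Xs fe"
  shows "set w \<subseteq> {1..N} \<Longrightarrow> length w \<le> s \<Longrightarrow> (f ^^ s) x \<in> Aword Xs f w
     \<Longrightarrow> map \<theta> [s - length w..<s] = w"
proof (induction w arbitrary: s rule: rev_induct)
  case Nil
  then show ?case by simp
next
  case (snoc i w)
  then obtain s' where s: "s = Suc s'" and i: "i \<in> {1..N}"
    by (cases s) auto
  let ?z = "(f ^^ s') x"
  have th: "\<theta> s' \<in> {1..N}" and z: "?z \<in> Xs (\<theta> s')"
    using is_itineraryD(1,2)[OF itin] by auto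
  then have fz: "(f ^^ s) x = fe (\<theta> s') ?z"
    using ext s by auto
  have "Fop Xs f i (Aword Xs f w) \<subseteq> fe i ` (Aword Xs f w \<inter> closure (Xs i))"
    using ext i by (intro Fop_subset_image_closure[OF cpt closed_Aword]) auto
  then obtain z' where z': "z' \<in> Aword Xs f w" "z' \<in> closure (Xs i)" "(f ^^ s) x = fe i z'"
    using snoc.prems(3) by (auto simp: Aword_snoc)
  have "(f ^^ s) x \<in> fe (\<theta> s') ` closure (Xs (\<theta> s')) \<inter> fe i ` closure (Xs i)"
    using z closure_subset fz z' by blast
  then have "\<theta> s' = i"
    using sep th i unfolding separation_def by blast
  moreover have "inj_on (fe i) (closure (Xs i))"
    using sep i unfolding separation_def by blast
  ultimately have "z' = ?z"
    using z closure_subset fz z' by (auto dest: inj_onD)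
  then have "map \<theta> [s' - length w..<s'] = w"
    using snoc.IH[of s'] snoc.prems s z'(1) by auto
  moreover have "[s - length (w @ [i])..<s] = [s' - length w..<s'] @ [s']"
    using s snoc.prems(2) by auto
  ultimately show ?case
    using \<open>\<theta> s' = i\<close> by simp
qed

lemma followers_subset_follower_pieces:
  assumes "is_itinerary N Xs f x \<theta>"
  shows "followers \<theta> n w \<subseteq> follower_pieces N Xs f x n w"
  using orbit_in_Aword_of_itinerary[OF assms] is_itineraryD(1,2)[OF assms]
  by (fastforce simp: followers_def follower_pieces_def)

lemma follower_pieces_eq_followers:
  fixes Xs :: "nat \<Rightarrow> 'a::metric_space set"
  assumes cpt: "compact (UNIV :: 'a set)"
    and ext: "\<forall>i\<in>{1..N}. continuous_on (closure (Xs i)) (fe i) \<and> (\<forall>y\<in>Xs i. fe i y = f y)"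
    and itin: "is_itinerary N Xs f x \<theta>"
    and sep: "separation N Xs fe"
    and w: "w \<in> Lang n \<theta>"
  shows "follower_pieces N Xs f x n w = followers \<theta> n w"
proof (rule subset_antisym[OF _ followers_subset_follower_pieces[OF itin]], rule subsetI)
  fix j assume "j \<in> follower_pieces N Xs f x n w"
  then obtain t where j: "j \<in> {1..N}" "(f ^^ (t + n)) x \<in> Aword Xs f w \<inter> Xs j"
    unfolding follower_pieces_def by auto
  have "set w \<subseteq> {1..N}" "length w = n"
    using Lang_subset_lists[of \<theta> "{1..N}" n] w is_itineraryD(1)[OF itin] by auto
  then have "map \<theta> [t..<t + n] = w"
    using itinerary_before_entering_Aword[OF cpt ext itin sep, of w "t + n"] j(2) by simp
  moreover have "\<theta> (t + n) = j"
    using is_itineraryD(3)[OF itin j(1)] j(2) by blast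
  ultimately show "j \<in> followers \<theta> n w"
    unfolding followers_def by blast
qed

lemma card_extensions_le_follower_pieces:
  assumes "is_itinerary N Xs f x \<theta>"
  shows "card (extensions \<theta> n w) \<le> card (follower_pieces N Xs f x n w)"
  unfolding card_extensions
  by (intro card_mono followers_subset_follower_pieces[OF assms]) (simp add: follower_pieces_def)

lemma card_extensions_pos:
  assumes "finite A" "\<forall>t. \<theta> t \<in> A" "w \<in> Lang n \<theta>"
  shows "1 \<le> card (extensions \<theta> n w)"
proof -
  obtain t where "w = map \<theta> [t..<t + n]"
    using assms(3) by (auto simp: Lang_def)
  then have "map \<theta> [t..<t + Suc n] \<in> extensions \<theta> n w"
    by (auto simp: extensions_def Lang_def take_map)
  moreover have "finite (extensions \<theta> n w)"
    using finite_Lang[OF assms(1,2)] by (simp add: extensions_def)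
  ultimately show ?thesis
    by (metis One_nat_def Suc_leI card_gt_0_iff empty_iff)
qed

lemma sum_card_follower_pieces:
  assumes itin: "is_itinerary N Xs f x \<theta>"
  shows "(\<Sum>w\<in>Lang n \<theta>. card (follower_pieces N Xs f x n w))
    = complexity \<theta> n + (\<Sum>k=2..N. (k - 1) * card (Lang_k N Xs f x \<theta> n k))"
  unfolding complexity_def Lang_k_eq_follower_pieces
proof (rule sum_eq_card_plus_weighted_level_sets)
  show "finite (Lang n \<theta>)"
    using is_itineraryD(1)[OF itin] by (intro finite_Lang[of "{1..N}"]) auto
  show "\<forall>w\<in>Lang n \<theta>. 1 \<le> card (follower_pieces N Xs f x n w) \<and> card (follower_pieces N Xs f x n w) \<le> N"
  proof
    fix w assume "w \<in> Lang n \<theta>"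
    then have "1 \<le> card (extensions \<theta> n w)"
      using is_itineraryD(1)[OF itin] by (intro card_extensions_pos[of "{1..N}"]) auto
    then show "1 \<le> card (follower_pieces N Xs f x n w) \<and> card (follower_pieces N Xs f x n w) \<le> N"
      using card_extensions_le_follower_pieces[OF itin, of n w] card_follower_pieces_le by simp
  qed
qed

theorem lemma4:
  fixes N :: nat and Xs :: "nat \<Rightarrow> 'a::metric_space set" and f :: "'a \<Rightarrow> 'a"
    and fe :: "nat \<Rightarrow> 'a \<Rightarrow> 'a" and x :: 'a and \<theta> :: "nat \<Rightarrow> nat"
  assumes cpt: "compact (UNIV :: 'a set)"
    and N2: "N \<ge> 2"
    and op: "\<forall>i\<in>{1..N}. open (Xs i) \<and> Xs i \<noteq> {}"
    and disj: "\<forall>i\<in>{1..N}. \<forall>j\<in>{1..N}. i \<noteq> j \<longrightarrow> Xs i \<inter> Xs j = {}"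
    and cover: "(\<Union>i\<in>{1..N}. closure (Xs i)) = UNIV"
    and ext: "\<forall>i\<in>{1..N}. continuous_on (closure (Xs i)) (fe i) \<and> (\<forall>y\<in>Xs i. fe i y = f y)"
    and xX: "x \<in> Xtilde N Xs f"
    and itin: "is_itinerary N Xs f x \<theta>"
  shows "(\<forall>n\<ge>1. complexity \<theta> (n + 1)
            \<le> complexity \<theta> n + (\<Sum>k=2..N. (k - 1) * card (Lang_k N Xs f x \<theta> n k)))
       \<and> (separation N Xs fe \<longrightarrow>
          (\<forall>n\<ge>1. complexity \<theta> (n + 1)
            = complexity \<theta> n + (\<Sum>k=2..N. (k - 1) * card (Lang_k N Xs f x \<theta> n k))))"
proof -
  have complexity_Suc: "complexity \<theta> (n + 1) = (\<Sum>w\<in>Lang n \<theta>. card (extensions \<theta> n w))" for n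
    using card_Lang_Suc[of "{1..N}" \<theta> n] is_itineraryD(1)[OF itin] by (simp add: complexity_def)
  have "complexity \<theta> (n + 1) \<le> (\<Sum>w\<in>Lang n \<theta>. card (follower_pieces N Xs f x n w))" for n
    unfolding complexity_Suc by (intro sum_mono card_extensions_le_follower_pieces[OF itin])
  moreover have "complexity \<theta> (n + 1) = (\<Sum>w\<in>Lang n \<theta>. card (follower_pieces N Xs f x n w))"
    if sep: "separation N Xs fe" for n
    unfolding complexity_Suc card_extensions
    by (intro sum.cong refl) (simp add: follower_pieces_eq_followers[OF cpt ext itin sep])
  ultimately show ?thesis
    using sum_card_follower_pieces[OF itin] by simp
qed

end
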